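(* Let $F$ be a graph on $\binom{n}{k}$ vertices with $k=n/2$, and let $\mathcal{R}$ be a $k$-reconstruction family of $F$. Then $\overline{\mathcal{R}}=\{V(F)\setminus X:X\in\mathcal{R}\}$ is a $k$-reconstruction family of $F$.
   Context: For a graph $F$ on $\binom{n}{k}$ vertices and a family $\mathcal{R}$ of subsets of $V(F)$, let $S_{\mathcal{R}}(A)=\{X\in\mathcal{R}:A\in X\}$ for $A\in V(F)$. $\mathcal{R}$ is a $k$-reconstruction family of $F$ if (1) $|X|=\binom{n-1}{k-1}$ for all $X\in\mathcal{R}$; (2) $|S_{\mathcal{R}}(A)|=k$ for all $A\in V(F)$; (3) for every edge $AB$ of $F$, $|S_{\mathcal{R}}(A)\cap S_{\mathcal{R}}(B)|=k-1$. *)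

theory Defs
  imports Main
begin

definition simple_graph :: "'a set \<Rightarrow> ('a \<Rightarrow> 'a \<Rightarrow> bool) \<Rightarrow> bool" where
  "simple_graph V E \<longleftrightarrow> finite V \<and>
     (\<forall>A B. E A B \<longrightarrow> A \<in> V \<and> B \<in> V \<and> A \<noteq> B \<and> E B A)"

definition S_fam :: "'a set set \<Rightarrow> 'a \<Rightarrow> 'a set set" where
  "S_fam R A = {X \<in> R. A \<in> X}"

definition k_reconstruction_family ::
  "nat \<Rightarrow> nat \<Rightarrow> 'a set \<Rightarrow> ('a \<Rightarrow> 'a \<Rightarrow> bool) \<Rightarrow> 'a set set \<Rightarrow> bool" where
  "k_reconstruction_family n k V E R \<longleftrightarrow>
     (\<forall>X\<in>R. X \<subseteq> V) \<and>
     (\<forall>X\<in>R. card X = (n - 1) choose (k - 1)) \<and>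
     (\<forall>A\<in>V. card (S_fam R A) = k) \<and>
     (\<forall>A B. A \<in> V \<longrightarrow> B \<in> V \<longrightarrow> E A B \<longrightarrow> card (S_fam R A \<inter> S_fam R B) = k - 1)"

end

theory Submission
  imports Defs
begin

text \<open>Double counting the incidences between vertices and members of R gives
  |V| k = |R| binom(n-1,k-1); for n = 2k we have |V| = binom(2k,k) = 2 binom(2k-1,k-1),
  hence |R| = 2k. The members of the complementary family containing a vertex A are the
  complements of the members of R missing A, so there are 2k - k = k of them; likewise
  two adjacent vertices lie in 2k - (k + k - (k-1)) = k-1 common complements, and each
  complement has 2 binom(2k-1,k-1) - binom(2k-1,k-1) elements.\<close>

lemma central_binomial_eq_double:
  assumes "0 < k"
  shows "(2 * k) choose k = 2 * ((2 * k - 1) choose (k - 1))"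
  using times_binomial_minus1_eq[OF assms, of "2 * k"] assms by simp

lemma finite_family_of_subsets:
  assumes "finite V" "\<forall>X\<in>R. X \<subseteq> V"
  shows "finite R"
  using assms by (meson Pow_iff finite_Pow_iff finite_subset subsetI)

lemma sum_card_S_fam:
  assumes "finite V" "\<forall>X\<in>R. X \<subseteq> V"
  shows "(\<Sum>A\<in>V. card (S_fam R A)) = (\<Sum>X\<in>R. card X)"
proof -
  have "finite R"
    using finite_family_of_subsets[OF assms] .
  have "(\<Sum>A\<in>V. card (S_fam R A)) = (\<Sum>A\<in>V. \<Sum>X\<in>R. if A \<in> X then 1 else 0)"
    using \<open>finite R\<close> by (simp add: S_fam_def sum.If_cases Int_def)
  also have "\<dots> = (\<Sum>X\<in>R. \<Sum>A\<in>V. if A \<in> X then 1 else 0)"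
    by (rule sum.swap)
  also have "\<dots> = (\<Sum>X\<in>R. card X)"
  proof (rule sum.cong[OF refl])
    fix X assume "X \<in> R"
    then have "V \<inter> {A. A \<in> X} = X" using assms(2) by blast
    then show "(\<Sum>A\<in>V. if A \<in> X then 1 else 0) = card X"
      using assms(1) by (simp add: sum.If_cases)
  qed
  finally show ?thesis .
qed

lemma S_fam_complements_Int:
  assumes "\<forall>X\<in>R. X \<subseteq> V" "A \<in> V" "B \<in> V"
  shows "S_fam ((\<lambda>X. V - X) ` R) A \<inter> S_fam ((\<lambda>X. V - X) ` R) B
           = (\<lambda>X. V - X) ` (R - (S_fam R A \<union> S_fam R B))"
  using assms unfolding S_fam_def by auto

lemma card_S_fam_complements_Int:
  assumes "finite R" "\<forall>X\<in>R. X \<subseteq> V" "A \<in> V" "B \<in> V"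
  shows "card (S_fam ((\<lambda>X. V - X) ` R) A \<inter> S_fam ((\<lambda>X. V - X) ` R) B)
           = card R - card (S_fam R A \<union> S_fam R B)"
proof -
  have "inj_on (\<lambda>X. V - X) R"
    using assms(2) by (intro inj_onI) blast
  then have "card ((\<lambda>X. V - X) ` (R - (S_fam R A \<union> S_fam R B)))
               = card (R - (S_fam R A \<union> S_fam R B))"
    by (meson Diff_subset card_image inj_on_subset)
  also have "\<dots> = card R - card (S_fam R A \<union> S_fam R B)"
    using assms(1) by (intro card_Diff_subset) (auto simp: S_fam_def)
  finally show ?thesis
    using S_fam_complements_Int[OF assms(2-4)] by simp
qed

lemma k_reconstruction_family_finite:
  assumes "k_reconstruction_family n k V E R" "finite V"
  shows "finite R"
  using assms finite_family_of_subsets unfolding k_reconstruction_family_def by blast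

lemma k_reconstruction_family_double_count:
  assumes "k_reconstruction_family n k V E R" "finite V"
  shows "card V * k = card R * ((n - 1) choose (k - 1))"
  using sum_card_S_fam[OF assms(2), of R] assms(1)
  unfolding k_reconstruction_family_def by simp

lemma complements_k_reconstruction_family:
  assumes R: "k_reconstruction_family n k V E R" and "finite V"
    and card_R: "card R = 2 * k"
    and card_V: "card V = 2 * ((n - 1) choose (k - 1))"
  shows "k_reconstruction_family n k V E ((\<lambda>X. V - X) ` R)"
proof -
  let ?c = "(n - 1) choose (k - 1)"
  have sub: "\<forall>X\<in>R. X \<subseteq> V" and card_X: "\<forall>X\<in>R. card X = ?c"
    and card_S: "\<forall>A\<in>V. card (S_fam R A) = k"
    and card_edge: "\<forall>A B. A \<in> V \<longrightarrow> B \<in> V \<longrightarrow> E A B \<longrightarrow> card (S_fam R A \<inter> S_fam R B) = k - 1"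
    using R unfolding k_reconstruction_family_def by auto
  have "finite R"
    using k_reconstruction_family_finite[OF R \<open>finite V\<close>] .
  have card_Un: "card (S_fam R A \<union> S_fam R B) + card (S_fam R A \<inter> S_fam R B) = k + k"
    if "A \<in> V" "B \<in> V" for A B
    using card_Un_Int[of "S_fam R A" "S_fam R B"] \<open>finite R\<close> card_S that
    by (simp add: S_fam_def)
  have "card (S_fam ((\<lambda>X. V - X) ` R) A) = k" if "A \<in> V" for A
    using card_S_fam_complements_Int[OF \<open>finite R\<close> sub that that] card_R card_S that by simp
  moreover have "card (S_fam ((\<lambda>X. V - X) ` R) A \<inter> S_fam ((\<lambda>X. V - X) ` R) B) = k - 1"
    if "A \<in> V" "B \<in> V" "E A B" for A B
    using card_S_fam_complements_Int[OF \<open>finite R\<close> sub that(1,2)] card_Un[OF that(1,2)]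
      card_edge that card_R by simp
  moreover have "card (V - X) = ?c" if "X \<in> R" for X
    using card_Diff_subset[of X V] finite_subset[of X V] \<open>finite V\<close> sub card_X card_V that
    by simp
  ultimately show ?thesis
    unfolding k_reconstruction_family_def by blast
qed

theorem proposition12:
  fixes n k :: nat and V :: "'a set" and E :: "'a \<Rightarrow> 'a \<Rightarrow> bool" and R :: "'a set set"
  assumes "simple_graph V E"
    and "card V = n choose k"
    and "n = 2 * k"
    and "k_reconstruction_family n k V E R"
  shows "k_reconstruction_family n k V E ((\<lambda>X. V - X) ` R)"
proof -
  let ?c = "(n - 1) choose (k - 1)"
  have "finite V"
    using assms(1) by (simp add: simple_graph_def)
  have double_count: "card V * k = card R * ?c"
    using k_reconstruction_family_double_count[OF assms(4) \<open>finite V\<close>] .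
  have "?c > 0"
    using assms(3) by simp
  show ?thesis
  proof (cases "k = 0")
    case True
    \<comment> \<open>here |V| = 1 while 2 binom(n-1,k-1) = 2, but R is empty\<close>
    then have "R = {}"
      using double_count \<open>?c > 0\<close> k_reconstruction_family_finite[OF assms(4) \<open>finite V\<close>] by simp
    then show ?thesis
      using assms(4) by simp
  next
    case False
    then have card_V: "card V = 2 * ?c"
      using assms(2,3) central_binomial_eq_double by simp
    then have "card R = 2 * k"
      using double_count \<open>?c > 0\<close> by simp
    then show ?thesis
      using complements_k_reconstruction_family[OF assms(4) \<open>finite V\<close> _ card_V] by simp
  qed
qed

end
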